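(* Let $\mathcal{X}\subset\mathbb{R}^d$, $\mathcal{Y}=\{1,\dots,c\}$, and let $D$ be a distribution on $\mathcal{X}\times\mathcal{Y}$ that is $k$-separable with $\delta$-margin (for some $\delta>0$), witnessed by a unit vector $a\in\mathbb{R}^d$, constants $b_1<b_2<\cdots<b_{k+1}$ and labels $y_1,\dots,y_k\in\mathcal{Y}$ as in the definition below. Let $f:\mathcal{Y}\to\mathbb{R}^m$ be injective, and regard $f(y)$ as the desired output for an input $x$ with label $y$. Define $W\in\mathbb{R}^{k\times m}$ to be the matrix whose first row is $f(y_1)^T$ and whose $i$-th row, for $2\le i\le k$, is $f(y_i)^T-f(y_{i-1})^T$; write $W=[w_1\;w_2\;\cdots\;w_m]$ with columns $w_j\in\mathbb{R}^k$, and assume $\max_j\|w_j\|_2>0$. Fix $\epsilon>0$ and set $$c_s=\frac{1}{\delta}\log\!\left(\frac{\sqrt{k}\,\max_{1\le j\le m}\|w_j\|_2}{\epsilon}\right).$$ Define the 2-layer network $g:\mathcal{X}\to\mathbb{R}^m$ by $$g(x)=W^T\big(\rho(c_s a^Tx-c_sb_1),\ \rho(c_s a^Tx-c_sb_2),\ \dots,\ \rho(c_s a^Tx-c_sb_k)\big)^T .$$ Then $$\mathbb{P}_{(x,y)\sim D}\Big(\max_{1\le j\le m}|g_j(x)-f_j(y)|>\epsilon\Big)=0,$$ where $g_j,f_j$ denote $j$-th components. This network is specified by $d+(m+1)k$ real parameters (the $d$ entries of $c_sa$, the $k$ hidden biases $c_sb_1,\dots,c_sb_k$, and the $mk$ entries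 of $W$).
   Context: $\rho(t)=1/(1+e^{-t})$ is the sigmoid function. Definition ($k$-separable with $\delta$-margin): Let $\mathcal{X}\subset\mathbb{R}^d$ and $\mathcal{Y}=\{1,\dots,c\}$. A distribution $D$ over $\mathcal{X}\times\mathcal{Y}$ is $k$-separable with $\delta$-margin ($\delta>0$) if there exist a projection vector $a\in\mathbb{R}^d$ with $\|a\|_2=1$ and constants $b_1<b_2<\cdots<b_{k+1}$ such that, setting $\mathcal{X}_i=\{x\in\mathcal{X}: b_i+\delta<a^Tx<b_{i+1}-\delta\}$ for $i\in\{1,\dots,k\}$: (i) for each $i$ there is $y_i\in\mathcal{Y}$ with $\mathbb{P}_{(x,y)\sim D}(y=y_i\mid x\in\mathcal{X}_i)=1$; (ii) $\mathbb{P}_{(x,y)\sim D}\big(x\in\bigcup_{i=1}^k\mathcal{X}_i\big)=1$. The number $k$ of intervals may exceed the number $c$ of labels. *)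

theory Defs
  imports "HOL-Probability.Probability"
begin

definition sigmoid :: "real \<Rightarrow> real" where
  "sigmoid t = 1 / (1 + exp (- t))"

text \<open>The open slab X_i (as a subset of R^d; the intersection with the input
  domain X is irrelevant because D is concentrated on X times Y).\<close>
definition slab :: "real ^ 'd \<Rightarrow> (nat \<Rightarrow> real) \<Rightarrow> real \<Rightarrow> nat \<Rightarrow> (real ^ 'd) set" where
  "slab a b \<delta> i = {x. b i + \<delta> < a \<bullet> x \<and> a \<bullet> x < b (Suc i) - \<delta>}"

text \<open>P(A | B) = 1, written as P(A \<inter> B) = P(B) (i.e. P(A|B) P(B) = P(B)).\<close>
definition cond_prob_one :: "'a measure \<Rightarrow> 'a set \<Rightarrow> 'a set \<Rightarrow> bool" where
  "cond_prob_one M A B \<longleftrightarrow> measure M (A \<inter> B) = measure M B"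

definition k_separable_with ::
  "((real ^ 'd) \<times> nat) measure \<Rightarrow> nat \<Rightarrow> nat \<Rightarrow> real \<Rightarrow> real ^ 'd \<Rightarrow> (nat \<Rightarrow> real) \<Rightarrow> (nat \<Rightarrow> nat) \<Rightarrow> bool" where
  "k_separable_with D c k \<delta> a b ylab \<longleftrightarrow>
     \<delta> > 0 \<and> norm a = 1 \<and> (\<forall>i\<in>{1..k}. b i < b (Suc i)) \<and>
     (\<forall>i\<in>{1..k}. ylab i \<in> {1..c} \<and>
        cond_prob_one D {z \<in> space D. snd z = ylab i} {z \<in> space D. fst z \<in> slab a b \<delta> i}) \<and>
     measure D {z \<in> space D. fst z \<in> (\<Union>i\<in>{1..k}. slab a b \<delta> i)} = 1"

definition Wmat :: "(nat \<Rightarrow> real ^ 'm) \<Rightarrow> (nat \<Rightarrow> nat) \<Rightarrow> nat \<Rightarrow> 'm \<Rightarrow> real" where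
  "Wmat f ylab i j = (if i = 1 then f (ylab 1) $ j else f (ylab i) $ j - f (ylab (i - 1)) $ j)"

definition Wcol_norm :: "(nat \<Rightarrow> real ^ 'm) \<Rightarrow> (nat \<Rightarrow> nat) \<Rightarrow> nat \<Rightarrow> 'm \<Rightarrow> real" where
  "Wcol_norm f ylab k j = sqrt (\<Sum>i = 1..k. (Wmat f ylab i j)\<^sup>2)"

definition max_col_norm :: "(nat \<Rightarrow> real ^ 'm::finite) \<Rightarrow> (nat \<Rightarrow> nat) \<Rightarrow> nat \<Rightarrow> real" where
  "max_col_norm f ylab k = Max (range (Wcol_norm f ylab k))"

definition scale_cs :: "(nat \<Rightarrow> real ^ 'm::finite) \<Rightarrow> (nat \<Rightarrow> nat) \<Rightarrow> nat \<Rightarrow> real \<Rightarrow> real \<Rightarrow> real" where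
  "scale_cs f ylab k \<delta> \<epsilon> = (1 / \<delta>) * ln (sqrt (real k) * max_col_norm f ylab k / \<epsilon>)"

definition net :: "(nat \<Rightarrow> real ^ 'm::finite) \<Rightarrow> (nat \<Rightarrow> nat) \<Rightarrow> nat \<Rightarrow> real \<Rightarrow> real \<Rightarrow> real ^ 'd \<Rightarrow> (nat \<Rightarrow> real) \<Rightarrow> real ^ 'd \<Rightarrow> real ^ 'm" where
  "net f ylab k \<delta> \<epsilon> a b x = (\<chi> j. \<Sum>i = 1..k.
      Wmat f ylab i j * sigmoid (scale_cs f ylab k \<delta> \<epsilon> * (a \<bullet> x) - scale_cs f ylab k \<delta> \<epsilon> * b i))"

end

theory Submission
  imports Defs
begin

text \<open>On the slab X_i the hidden units 1, ..., i receive arguments c_s (a.x - b_l) > c_s delta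
  and the remaining ones arguments < -c_s delta, so the hidden layer lies within
  exp(-c_s delta) of the step vector (1, ..., 1, 0, ..., 0) with i ones, in each coordinate.
  The rows of W are successive differences of the targets, so W^T maps this step vector
  exactly to f(y_i); by Cauchy-Schwarz the error in output j is then below
  sqrt k |w_j| exp(-c_s delta) <= epsilon, which is how c_s was chosen. Almost every sample
  lies in a slab carrying its own label, so the error exceeds epsilon only on a null set.\<close>

lemma sigmoid_pos: "sigmoid t > 0"
  unfolding sigmoid_def by (simp add: add_pos_pos)

lemma sigmoid_less_1: "sigmoid t < 1"
  unfolding sigmoid_def by (simp add: add_pos_pos)

lemma sigmoid_less_exp: "sigmoid t < exp t"
proof -
  have "sigmoid t = exp t / (exp t + 1)"
    unfolding sigmoid_def exp_minus by (simp add: field_simps add_pos_pos)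
  also have "\<dots> < exp t"
    by (simp add: divide_less_eq add_pos_pos)
  finally show ?thesis .
qed

lemma one_minus_sigmoid: "1 - sigmoid t = sigmoid (- t)"
proof -
  have "0 < 1 + exp t"
    by (simp add: add_pos_pos)
  then show ?thesis
    by (simp add: sigmoid_def exp_minus field_simps)
qed

lemma sigmoid_scaled_less:
  assumes "t < - \<delta>" "\<delta> > 0"
  shows "sigmoid (c * t) < exp (- (c * \<delta>))"
proof (cases "c \<ge> 0")
  case True
  then have "c * t \<le> - (c * \<delta>)"
    using assms by (metis less_eq_real_def minus_mult_right mult_left_mono)
  then show ?thesis
    using sigmoid_less_exp[of "c * t"] by (meson exp_le_cancel_iff less_le_trans)
next
  case False
  then have "1 < exp (- (c * \<delta>))"
    using assms by (simp add: mult_neg_pos)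
  then show ?thesis
    using sigmoid_less_1 by (meson less_trans)
qed

lemma abs_sigmoid_scaled_less:
  assumes "\<delta> > 0"
  shows "t < - \<delta> \<Longrightarrow> \<bar>sigmoid (c * t)\<bar> < exp (- (c * \<delta>))"
    and "t > \<delta> \<Longrightarrow> \<bar>sigmoid (c * t) - 1\<bar> < exp (- (c * \<delta>))"
proof -
  show "t < - \<delta> \<Longrightarrow> \<bar>sigmoid (c * t)\<bar> < exp (- (c * \<delta>))"
    using sigmoid_scaled_less[OF _ assms] sigmoid_pos by (simp add: abs_of_pos)
  assume "t > \<delta>"
  then have "sigmoid (c * - t) < exp (- (c * \<delta>))"
    using sigmoid_scaled_less[of "- t" \<delta> c] assms by simp
  moreover have "\<bar>sigmoid (c * t) - 1\<bar> = sigmoid (c * - t)"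
    using one_minus_sigmoid[of "c * t"] sigmoid_less_1[of "c * t"] by simp
  ultimately show "\<bar>sigmoid (c * t) - 1\<bar> < exp (- (c * \<delta>))"
    by simp
qed

lemma le_of_Suc_less_on:
  fixes b :: "nat \<Rightarrow> 'a::order"
  assumes "\<forall>i\<in>{1..k}. b i < b (Suc i)" "1 \<le> l" "l \<le> i" "i \<le> Suc k"
  shows "b l \<le> b i"
  using assms(3,4)
proof (induction i rule: dec_induct)
  case (step n)
  then have "b n < b (Suc n)"
    using assms(1,2) by auto
  with step show ?case
    by auto
qed simp

lemma sum_Wmat_telescope:
  "1 \<le> i \<Longrightarrow> (\<Sum>l = 1..i. Wmat f ylab l j) = f (ylab i) $ j"
proof (induction i)
  case (Suc n)
  then show ?case
    by (cases n) (auto simp: Wmat_def)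
qed simp

lemma Wmat_step_vector:
  assumes "i \<in> {1..k}"
  shows "(\<Sum>l = 1..k. Wmat f ylab l j * (if l \<le> i then 1 else 0)) = f (ylab i) $ j"
proof -
  have "(\<Sum>l = 1..k. Wmat f ylab l j * (if l \<le> i then 1 else 0)) = (\<Sum>l = 1..i. Wmat f ylab l j)"
    by (rule sum.mono_neutral_cong_right) (use assms in auto)
  also have "\<dots> = f (ylab i) $ j"
    by (rule sum_Wmat_telescope) (use assms in simp)
  finally show ?thesis .
qed

lemma sum_abs_Wmat_le:
  fixes f :: "nat \<Rightarrow> real ^ 'm::finite"
  shows "(\<Sum>l = 1..k. \<bar>Wmat f ylab l j\<bar>) \<le> sqrt (real k) * max_col_norm f ylab k"
proof -
  have "(\<Sum>l = 1..k. \<bar>Wmat f ylab l j\<bar>) = (\<Sum>l = 1..k. \<bar>Wmat f ylab l j\<bar> * \<bar>1::real\<bar>)"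
    by simp
  also have "\<dots> \<le> L2_set (\<lambda>l. Wmat f ylab l j) {1..k} * L2_set (\<lambda>_. 1) {1..k}"
    by (rule L2_set_mult_ineq)
  also have "\<dots> = sqrt (real k) * Wcol_norm f ylab k j"
    by (simp add: L2_set_constant Wcol_norm_def L2_set_def[of "\<lambda>l. Wmat f ylab l j"])
  also have "\<dots> \<le> sqrt (real k) * max_col_norm f ylab k"
    unfolding max_col_norm_def by (intro mult_left_mono Max_ge) auto
  finally show ?thesis .
qed

lemma abs_sum_mult_less:
  fixes w e :: "'i \<Rightarrow> real"
  assumes "finite A" "\<forall>l\<in>A. \<bar>e l\<bar> < E" "\<exists>l\<in>A. w l \<noteq> 0"
  shows "\<bar>\<Sum>l\<in>A. w l * e l\<bar> < E * (\<Sum>l\<in>A. \<bar>w l\<bar>)"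
proof -
  have "\<bar>\<Sum>l\<in>A. w l * e l\<bar> \<le> (\<Sum>l\<in>A. \<bar>w l\<bar> * \<bar>e l\<bar>)"
    using sum_abs[of "\<lambda>l. w l * e l" A] by (simp add: abs_mult)
  also have "\<dots> < (\<Sum>l\<in>A. \<bar>w l\<bar> * E)"
  proof (rule sum_strict_mono_ex1[OF assms(1)])
    show "\<forall>l\<in>A. \<bar>w l\<bar> * \<bar>e l\<bar> \<le> \<bar>w l\<bar> * E"
      using assms(2) by (simp add: less_imp_le mult_left_mono)
    show "\<exists>l\<in>A. \<bar>w l\<bar> * \<bar>e l\<bar> < \<bar>w l\<bar> * E"
    proof -
      obtain l where "l \<in> A" "w l \<noteq> 0"
        using assms(3) by blast
      then show ?thesis
        using assms(2) by (intro bexI[of _ l]) simp_all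
    qed
  qed
  also have "\<dots> = E * (\<Sum>l\<in>A. \<bar>w l\<bar>)"
    by (simp add: sum_distrib_left mult_ac)
  finally show ?thesis .
qed

lemma net_error_on_slab:
  fixes f :: "nat \<Rightarrow> real ^ 'm::finite"
  assumes "\<delta> > 0" "\<forall>i\<in>{1..k}. b i < b (Suc i)" "i \<in> {1..k}" "x \<in> slab a b \<delta> i"
    and "max_col_norm f ylab k > 0" "\<epsilon> > 0"
  shows "\<bar>net f ylab k \<delta> \<epsilon> a b x $ j - f (ylab i) $ j\<bar> < \<epsilon>"
proof -
  define c where "c = scale_cs f ylab k \<delta> \<epsilon>"
  define E where "E = exp (- (c * \<delta>))"
  define M where "M = max_col_norm f ylab k"
  define w where "w = (\<lambda>l. Wmat f ylab l j)"
  define e where "e = (\<lambda>l. sigmoid (c * (a \<bullet> x - b l)) - (if l \<le> i then 1 else 0))"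
  have "k > 0" "M > 0"
    using assms(3,5) by (auto simp: M_def)
  then have E_bound: "E * (sqrt (real k) * M) = \<epsilon>"
    using assms(1,6) by (simp add: E_def c_def scale_cs_def M_def exp_minus)
  have e_less: "\<forall>l\<in>{1..k}. \<bar>e l\<bar> < E"
  proof
    fix l assume l: "l \<in> {1..k}"
    show "\<bar>e l\<bar> < E"
    proof (cases "l \<le> i")
      case True
      then have "b l \<le> b i"
        using le_of_Suc_less_on[OF assms(2)] l assms(3) by simp
      then have "a \<bullet> x - b l > \<delta>"
        using assms(4) by (simp add: slab_def)
      with True show ?thesis
        using abs_sigmoid_scaled_less(2)[OF assms(1)] by (simp add: e_def E_def)
    next
      case False
      then have "b (Suc i) \<le> b l"
        using le_of_Suc_less_on[OF assms(2)] l by simp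
      then have "a \<bullet> x - b l < - \<delta>"
        using assms(4) by (simp add: slab_def)
      with False show ?thesis
        using abs_sigmoid_scaled_less(1)[OF assms(1)] by (simp add: e_def E_def)
    qed
  qed
  have error: "net f ylab k \<delta> \<epsilon> a b x $ j - f (ylab i) $ j = (\<Sum>l = 1..k. w l * e l)"
    by (simp add: net_def c_def w_def e_def right_diff_distrib sum_subtractf
        Wmat_step_vector[OF assms(3), symmetric])
  show ?thesis
  proof (cases "\<exists>l\<in>{1..k}. w l \<noteq> 0")
    case True
    have "\<bar>\<Sum>l = 1..k. w l * e l\<bar> < E * (\<Sum>l = 1..k. \<bar>w l\<bar>)"
      using abs_sum_mult_less[OF _ e_less True] by simp
    also have "\<dots> \<le> E * (sqrt (real k) * M)"
      using sum_abs_Wmat_le by (simp add: E_def M_def w_def mult_left_mono)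
    finally show ?thesis
      using error E_bound by simp
  next
    case False
    then show ?thesis
      using error assms(6) by simp
  qed
qed

lemma (in finite_measure) AE_of_cond_prob_one:
  assumes "A \<in> sets M" "B \<in> sets M" "cond_prob_one M A B"
  shows "AE x in M. x \<in> B \<longrightarrow> x \<in> A"
proof -
  have "measure M (B - A) = 0"
    using assms finite_measure_Diff'[of B A] by (simp add: cond_prob_one_def Int_commute)
  then have "B - A \<in> null_sets M"
    using assms by (simp add: emeasure_eq_measure null_setsI)
  then show ?thesis
    by (rule AE_mp[OF AE_not_in]) auto
qed

lemma AE_in_labelled_slab:
  fixes D :: "((real ^ 'd) \<times> nat) measure"
  assumes "prob_space D" "sets D = sets (borel \<Otimes>\<^sub>M count_space UNIV)"
    and "k_separable_with D c k \<delta> a b ylab"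
  shows "AE z in D. \<exists>i\<in>{1..k}. fst z \<in> slab a b \<delta> i \<and> snd z = ylab i"
proof -
  interpret prob_space D by fact
  have fst_meas: "fst \<in> measurable D borel" and snd_meas: "snd \<in> measurable D (count_space UNIV)"
    using measurable_cong_sets[OF assms(2) refl] by auto
  have "slab a b \<delta> i \<in> sets borel" for i
    unfolding slab_def by (intro borel_open open_Collect_conj open_Collect_less continuous_intros)
  then have slab_sets: "{z \<in> space D. fst z \<in> slab a b \<delta> i} \<in> sets D" for i
    using measurable_sets[OF fst_meas] by (simp add: vimage_def Int_def conj_commute)
  have label_sets: "{z \<in> space D. snd z = ylab i} \<in> sets D" for i
    using measurable_sets[OF snd_meas, of "{ylab i}"] by (simp add: vimage_def Int_def conj_commute)
  have "AE z in D. z \<in> {z \<in> space D. fst z \<in> (\<Union>i\<in>{1..k}. slab a b \<delta> i)}"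
    using assms(3) by (intro AE_prob_1) (simp add: k_separable_with_def)
  moreover have "AE z in D. \<forall>i\<in>{1..k}. fst z \<in> slab a b \<delta> i \<longrightarrow> snd z = ylab i"
  proof (rule AE_finite_allI)
    fix i assume "i \<in> {1..k}"
    then have "cond_prob_one D {z \<in> space D. snd z = ylab i} {z \<in> space D. fst z \<in> slab a b \<delta> i}"
      using assms(3) by (simp add: k_separable_with_def)
    from AE_of_cond_prob_one[OF label_sets slab_sets this]
    show "AE z in D. fst z \<in> slab a b \<delta> i \<longrightarrow> snd z = ylab i"
      by (rule AE_mp) (auto intro: AE_space[THEN AE_mp])
  qed simp
  ultimately show ?thesis
    by eventually_elim auto
qed

theorem theorem1:
  fixes D :: "((real ^ 'd) \<times> nat) measure"
    and X :: "(real ^ 'd) set"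
    and c k :: nat and \<delta> \<epsilon> :: real
    and a :: "real ^ 'd" and b :: "nat \<Rightarrow> real" and ylab :: "nat \<Rightarrow> nat"
    and f :: "nat \<Rightarrow> real ^ 'm::finite"
  assumes "prob_space D"
    and "sets D = sets (borel \<Otimes>\<^sub>M count_space UNIV)"
    and "AE z in D. fst z \<in> X \<and> snd z \<in> {1..c}"
    and "k_separable_with D c k \<delta> a b ylab"
    and "inj_on f {1..c}"
    and "max_col_norm f ylab k > 0"
    and "\<epsilon> > 0"
  shows "measure D {z \<in> space D.
           Max (range (\<lambda>j. \<bar>net f ylab k \<delta> \<epsilon> a b (fst z) $ j - f (snd z) $ j\<bar>)) > \<epsilon>} = 0"
proof -
  have separated: "\<delta> > 0" "\<forall>i\<in>{1..k}. b i < b (Suc i)"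
    using assms(4) by (auto simp: k_separable_with_def)
  have "AE z in D. \<not> Max (range (\<lambda>j. \<bar>net f ylab k \<delta> \<epsilon> a b (fst z) $ j - f (snd z) $ j\<bar>)) > \<epsilon>"
    using AE_in_labelled_slab[OF assms(1,2,4)]
  proof eventually_elim
    case (elim z)
    then obtain i where i: "i \<in> {1..k}" "fst z \<in> slab a b \<delta> i" "snd z = ylab i"
      by blast
    then have "\<forall>j. \<bar>net f ylab k \<delta> \<epsilon> a b (fst z) $ j - f (snd z) $ j\<bar> < \<epsilon>"
      using net_error_on_slab[OF separated i(1,2) assms(6,7)] by simp
    then have "Max (range (\<lambda>j. \<bar>net f ylab k \<delta> \<epsilon> a b (fst z) $ j - f (snd z) $ j\<bar>)) < \<epsilon>"
      by (subst Max_less_iff) auto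
    then show ?case
      by linarith
  qed
  from AE_E2[OF this] show ?thesis
    by (simp add: measure_def)
qed

end
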